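(* Let $n$ be a positive integer and let $\mathcal M_{n^2}$ be the set of integer matrices of determinant $n^2$ whose entries have greatest common divisor $1$. A complete set of representatives of the $\mathrm{SL}(2,\mathbb Z)$-conjugacy classes of hyperbolic elements of $\mathcal M_{n^2}$ whose fixed points are cusps is $$\left\{\pm\begin{pmatrix}a&b+ma\\0&d\end{pmatrix}:\ b=1,\dots,h,\ \gcd(b,h)=1,\ m=1,\dots,(d-a)/h,\ \text{where }h=\gcd(a,d)\right\},$$ where $a$ and $d$ run over all integers satisfying $ad=n^2$ and $0<a<d$.
   Context: An element is hyperbolic if its fixed points in $\mathbb P^1(\mathbb C)$ are two distinct real numbers; "fixed points are cusps" means both fixed points lie in $\mathbb P^1(\mathbb Q)$. Two such elements are equivalent if they are conjugate by an element of $\mathrm{SL}(2,\mathbb Z)$. *)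

theory Defs
  imports Complex_Main
begin

text \<open>A 2x2 integer matrix (a, b, c, d) stands for the matrix with rows (a b) and (c d).\<close>
type_synonym mat2 = "int \<times> int \<times> int \<times> int"

definition mat2_mult :: "mat2 \<Rightarrow> mat2 \<Rightarrow> mat2" where
  "mat2_mult A B = (case A of (a, b, c, d) \<Rightarrow> case B of (e, f, g, h) \<Rightarrow>
     (a*e + b*g, a*f + b*h, c*e + d*g, c*f + d*h))"

definition mat2_det :: "mat2 \<Rightarrow> int" where
  "mat2_det A = (case A of (a, b, c, d) \<Rightarrow> a*d - b*c)"

definition mat2_scale :: "int \<Rightarrow> mat2 \<Rightarrow> mat2" where
  "mat2_scale s A = (case A of (a, b, c, d) \<Rightarrow> (s*a, s*b, s*c, s*d))"

definition SL2Z :: "mat2 set" where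
  "SL2Z = {A. mat2_det A = 1}"

definition mat2_adj :: "mat2 \<Rightarrow> mat2" where
  "mat2_adj A = (case A of (a, b, c, d) \<Rightarrow> (d, -b, -c, a))"

definition SL2Z_conj :: "mat2 \<Rightarrow> mat2 \<Rightarrow> bool" where
  "SL2Z_conj A B \<longleftrightarrow> (\<exists>g\<in>SL2Z. B = mat2_mult (mat2_mult g A) (mat2_adj g))"

definition primitive_mats :: "int \<Rightarrow> mat2 set" where
  "primitive_mats N = {A. mat2_det A = N \<and>
     (case A of (a, b, c, d) \<Rightarrow> gcd (gcd a b) (gcd c d) = 1)}"

text \<open>Points of P^1(C): Some z is the point [z:1], None is \<infinity> = [1:0].
  The fixed points of the Moebius action of A on P^1(C).\<close>
definition fixed_points :: "mat2 \<Rightarrow> complex option set" where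
  "fixed_points A = (case A of (a, b, c, d) \<Rightarrow>
     {Some z | z. of_int a * z + of_int b = z * (of_int c * z + of_int d)}
     \<union> (if c = 0 then {None} else {}))"

definition in_P1R :: "complex option \<Rightarrow> bool" where
  "in_P1R p = (case p of None \<Rightarrow> True | Some z \<Rightarrow> z \<in> \<real>)"

definition in_P1Q :: "complex option \<Rightarrow> bool" where
  "in_P1Q p = (case p of None \<Rightarrow> True | Some z \<Rightarrow> z \<in> \<rat>)"

definition hyperbolic :: "mat2 \<Rightarrow> bool" where
  "hyperbolic A \<longleftrightarrow> card (fixed_points A) = 2 \<and> (\<forall>p\<in>fixed_points A. in_P1R p)"

definition cusp_fixed :: "mat2 \<Rightarrow> bool" where
  "cusp_fixed A \<longleftrightarrow> (\<forall>p\<in>fixed_points A. in_P1Q p)"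

definition reps :: "nat \<Rightarrow> mat2 set" where
  "reps n = {mat2_scale s (a, b + m*a, 0, d) | s a d b m.
     s \<in> {1, -1} \<and> 0 < a \<and> a < d \<and> a * d = (int n)^2 \<and>
     1 \<le> b \<and> b \<le> gcd a d \<and> coprime b (gcd a d) \<and>
     1 \<le> m \<and> m \<le> (d - a) div gcd a d}"

definition complete_reps :: "mat2 set \<Rightarrow> mat2 set \<Rightarrow> bool" where
  "complete_reps R S \<longleftrightarrow> R \<subseteq> S \<and> (\<forall>A\<in>S. \<exists>B\<in>R. SL2Z_conj A B) \<and>
     (\<forall>B1\<in>R. \<forall>B2\<in>R. SL2Z_conj B1 B2 \<longrightarrow> B1 = B2)"

end

theory Submission
  imports Defs
begin

text \<open>A hyperbolic element \<open>A\<close> whose fixed points are cusps has a rational, hence primitive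
  integral, eigenvector; moving it to \<open>\<infinity>\<close> by an element of SL(2,Z) makes \<open>A\<close> upper
  triangular with integer eigenvalues \<open>l \<mu> = n\<^sup>2\<close>, and \<open>l \<noteq> \<mu>\<close> because the discriminant
  \<open>(l - \<mu>)\<^sup>2\<close> of a hyperbolic element is nonzero. Swapping the two fixed points if necessary and
  pulling out the common sign gives \<open>\<plusminus>(a, x; 0, d)\<close> with \<open>0 < a < d\<close>. The translations
  \<open>(1, w; 0, 1)\<close> then change \<open>x\<close> by arbitrary multiples of \<open>d - a\<close>, and up to sign they are
  the only elements of SL(2,Z) conjugating one such matrix into another. Primitivity says that \<open>x\<close> is
  coprime to \<open>h = gcd a d\<close>, and each such residue class modulo \<open>d - a = h \<cdot> (d - a)/h\<close> is
  hit exactly once by \<open>b + m a\<close>, since \<open>a/h\<close> is invertible modulo \<open>(d - a)/h\<close>.\<close>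

lemma mat2_mult_assoc: "mat2_mult (mat2_mult A B) C = mat2_mult A (mat2_mult B C)"
  by (cases A rule: prod_cases4; cases B rule: prod_cases4; cases C rule: prod_cases4)
     (simp add: mat2_mult_def algebra_simps)

lemma mat2_mult_1_left [simp]: "mat2_mult (1, 0, 0, 1) A = A"
  by (cases A rule: prod_cases4) (simp add: mat2_mult_def)

lemma mat2_mult_1_right [simp]: "mat2_mult A (1, 0, 0, 1) = A"
  by (cases A rule: prod_cases4) (simp add: mat2_mult_def)

lemma mat2_det_mult: "mat2_det (mat2_mult A B) = mat2_det A * mat2_det B"
  by (cases A rule: prod_cases4; cases B rule: prod_cases4)
     (simp add: mat2_mult_def mat2_det_def algebra_simps)

lemma mat2_det_adj [simp]: "mat2_det (mat2_adj A) = mat2_det A"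
  by (cases A rule: prod_cases4) (simp add: mat2_adj_def mat2_det_def algebra_simps)

lemma mat2_adj_adj [simp]: "mat2_adj (mat2_adj A) = A"
  by (cases A rule: prod_cases4) (simp add: mat2_adj_def)

lemma mat2_adj_mult: "mat2_adj (mat2_mult A B) = mat2_mult (mat2_adj B) (mat2_adj A)"
  by (cases A rule: prod_cases4; cases B rule: prod_cases4)
     (simp add: mat2_mult_def mat2_adj_def algebra_simps)

lemma mat2_mult_adj_left: "mat2_det A = 1 \<Longrightarrow> mat2_mult (mat2_adj A) A = (1, 0, 0, 1)"
  by (cases A rule: prod_cases4) (simp add: mat2_mult_def mat2_adj_def mat2_det_def algebra_simps)

definition mat2_trace :: "mat2 \<Rightarrow> int" where
  "mat2_trace A = (case A of (a, b, c, d) \<Rightarrow> a + d)"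

definition mat2_content :: "mat2 \<Rightarrow> int" where
  "mat2_content A = (case A of (a, b, c, d) \<Rightarrow> gcd (gcd a b) (gcd c d))"

lemma primitive_mats_iff: "A \<in> primitive_mats N \<longleftrightarrow> mat2_det A = N \<and> mat2_content A = 1"
  by (cases A rule: prod_cases4) (simp add: primitive_mats_def mat2_content_def)

lemma mat2_content_dvd_mult_left: "mat2_content A dvd mat2_content (mat2_mult X A)"
  by (cases A rule: prod_cases4; cases X rule: prod_cases4)
     (simp add: mat2_content_def mat2_mult_def, meson dvd_add dvd_mult dvd_trans gcd_dvd1 gcd_dvd2)

lemma mat2_content_dvd_mult_right: "mat2_content A dvd mat2_content (mat2_mult A X)"
  by (cases A rule: prod_cases4; cases X rule: prod_cases4)
     (simp add: mat2_content_def mat2_mult_def, meson dvd_add dvd_mult2 dvd_trans gcd_dvd1 gcd_dvd2)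

lemma mat2_det_scale: "mat2_det (mat2_scale s A) = s\<^sup>2 * mat2_det A"
  by (cases A rule: prod_cases4) (simp add: mat2_scale_def mat2_det_def power2_eq_square algebra_simps)

lemma mat2_trace_scale: "mat2_trace (mat2_scale s A) = s * mat2_trace A"
  by (cases A rule: prod_cases4) (simp add: mat2_scale_def mat2_trace_def algebra_simps)

lemma mat2_content_scale: "mat2_content (mat2_scale s A) = \<bar>s\<bar> * mat2_content A"
  by (cases A rule: prod_cases4) (simp add: mat2_scale_def mat2_content_def gcd_mult_left abs_mult)

lemma SL2Z_conj_sym:
  assumes "SL2Z_conj A B"
  shows "SL2Z_conj B A"
proof -
  obtain g where g: "mat2_det g = 1" and B: "B = mat2_mult (mat2_mult g A) (mat2_adj g)"
    using assms by (auto simp: SL2Z_conj_def SL2Z_def)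
  have "mat2_mult (mat2_mult (mat2_adj g) B) (mat2_adj (mat2_adj g)) =
        mat2_mult (mat2_mult (mat2_mult (mat2_adj g) g) A) (mat2_mult (mat2_adj g) g)"
    by (simp add: B mat2_mult_assoc)
  also have "\<dots> = A"
    using g by (simp add: mat2_mult_adj_left)
  finally show ?thesis
    using g unfolding SL2Z_conj_def SL2Z_def by (intro bexI[of _ "mat2_adj g"]) auto
qed

lemma SL2Z_conj_trans:
  assumes "SL2Z_conj A B" "SL2Z_conj B C"
  shows "SL2Z_conj A C"
proof -
  obtain g h where g: "mat2_det g = 1" "B = mat2_mult (mat2_mult g A) (mat2_adj g)"
    and h: "mat2_det h = 1" "C = mat2_mult (mat2_mult h B) (mat2_adj h)"
    using assms by (auto simp: SL2Z_conj_def SL2Z_def)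
  have "C = mat2_mult (mat2_mult (mat2_mult h g) A) (mat2_adj (mat2_mult h g))"
    using g h by (simp add: mat2_mult_assoc mat2_adj_mult)
  moreover have "mat2_det (mat2_mult h g) = 1"
    using g h by (simp add: mat2_det_mult)
  ultimately show ?thesis
    unfolding SL2Z_conj_def SL2Z_def by blast
qed

lemma SL2Z_conj_det: "SL2Z_conj A B \<Longrightarrow> mat2_det B = mat2_det A"
  by (auto simp: SL2Z_conj_def SL2Z_def mat2_det_mult)

lemma SL2Z_conj_trace:
  assumes "SL2Z_conj A B"
  shows "mat2_trace B = mat2_trace A"
proof -
  obtain g where g: "mat2_det g = 1" and B: "B = mat2_mult (mat2_mult g A) (mat2_adj g)"
    using assms by (auto simp: SL2Z_conj_def SL2Z_def)
  obtain p r q t where "g = (p, r, q, t)" by (cases g rule: prod_cases4)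
  moreover obtain a b c d where "A = (a, b, c, d)" by (cases A rule: prod_cases4)
  ultimately have "mat2_trace B = mat2_trace A * mat2_det g"
    by (simp add: B mat2_trace_def mat2_det_def mat2_mult_def mat2_adj_def algebra_simps)
  with g show ?thesis by simp
qed

lemma SL2Z_conj_content:
  assumes "SL2Z_conj A B"
  shows "mat2_content B = mat2_content A"
proof -
  have dvd: "mat2_content X dvd mat2_content Y" if "SL2Z_conj X Y" for X Y
    using that mat2_content_dvd_mult_left mat2_content_dvd_mult_right dvd_trans
    unfolding SL2Z_conj_def by blast
  have "mat2_content X \<ge> 0" for X
    by (cases X rule: prod_cases4) (simp add: mat2_content_def)
  then show ?thesis
    using dvd[OF assms] dvd[OF SL2Z_conj_sym[OF assms]] by (simp add: zdvd_antisym_nonneg)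
qed

lemma SL2Z_conj_intertwines:
  assumes "SL2Z_conj A B"
  obtains g where "mat2_det g = 1" "mat2_mult B g = mat2_mult g A"
proof -
  obtain g where g: "mat2_det g = 1" and B: "B = mat2_mult (mat2_mult g A) (mat2_adj g)"
    using assms by (auto simp: SL2Z_conj_def SL2Z_def)
  have "mat2_mult B g = mat2_mult (mat2_mult g A) (mat2_mult (mat2_adj g) g)"
    by (simp add: B mat2_mult_assoc)
  also have "\<dots> = mat2_mult g A"
    using g by (simp add: mat2_mult_adj_left)
  finally show ?thesis using g that by blast
qed

lemma fixed_points_upper:
  fixes a x d :: int
  assumes "a \<noteq> d"
  shows "fixed_points (a, x, 0, d) = {Some (of_int x / of_int (d - a)), None}"
proof -
  have "of_int a * z + of_int x = z * (0 * z + of_int d) \<longleftrightarrow> z = of_int x / of_int (d - a)"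
    for z :: complex
  proof -
    have "(of_int (d - a) :: complex) \<noteq> 0" using assms by simp
    then show ?thesis by (auto simp: field_simps)
  qed
  then show ?thesis by (auto simp: fixed_points_def)
qed

lemma hyperbolic_cusp_fixed_upper:
  fixes a x d :: int
  assumes "a \<noteq> d"
  shows "hyperbolic (a, x, 0, d) \<and> cusp_fixed (a, x, 0, d)"
  using fixed_points_upper[OF assms]
  by (simp add: hyperbolic_def cusp_fixed_def in_P1R_def in_P1Q_def)

lemma hyperbolic_discriminant_nonzero:
  assumes "hyperbolic A"
  shows "(mat2_trace A)\<^sup>2 \<noteq> 4 * mat2_det A"
proof
  obtain a b c d where A: "A = (a, b, c, d)" by (cases A rule: prod_cases4)
  assume "(mat2_trace A)\<^sup>2 = 4 * mat2_det A"
  then have disc: "(a - d)\<^sup>2 + 4 * b * c = 0"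
    by (simp add: A mat2_trace_def mat2_det_def power2_eq_square algebra_simps)
  have card: "card (fixed_points A) = 2"
    using assms by (simp add: hyperbolic_def)
  show False
  proof (cases "c = 0")
    case True
    then have "a = d" using disc by simp
    show False
    proof (cases "b = 0")
      case True
      have "range Some \<subseteq> fixed_points A"
        using \<open>c = 0\<close> \<open>a = d\<close> True by (auto simp: A fixed_points_def)
      moreover have "infinite (range (Some :: complex \<Rightarrow> _))"
        by (simp add: finite_image_iff infinite_UNIV_char_0)
      ultimately show False
        using card by (metis card.infinite finite_subset zero_neq_numeral)
    next
      case False
      then have "fixed_points A = {None}"
        using \<open>c = 0\<close> \<open>a = d\<close> by (auto simp: A fixed_points_def)
      then show False using card by simp
    qed
  next
    case False
    define z0 :: complex where "z0 = of_int (a - d) / (2 * of_int c)"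
    have "fixed_points A \<subseteq> {Some z0}"
    proof
      fix p assume "p \<in> fixed_points A"
      then obtain z where p: "p = Some z"
        and fix_z: "of_int a * z + of_int b = z * (of_int c * z + of_int d)"
        using False by (auto simp: A fixed_points_def)
      \<comment> \<open>completing the square in the fixed-point equation\<close>
      have "(2 * of_int c * z + of_int (d - a))\<^sup>2 = (of_int ((a - d)\<^sup>2 + 4 * b * c) :: complex)
              + 4 * of_int c * (z * (of_int c * z + of_int d) - (of_int a * z + of_int b))"
        by (simp add: power2_eq_square algebra_simps)
      then have "2 * of_int c * z + of_int (d - a) = 0"
        using disc fix_z by simp
      then have "z = z0" using False by (simp add: z0_def field_simps)
      then show "p \<in> {Some z0}" using p by simp
    qed
    then have "card (fixed_points A) \<le> card {Some z0}"
      by (intro card_mono) auto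
    then show False using card by simp
  qed
qed

lemma primitive_eigenvector_of_rational_fixed_point:
  fixes a b c d P Q :: int
  assumes "coprime P Q" "Q > 0"
    and fix_PQ: "(of_int a * (of_int P / of_int Q) + of_int b :: complex) =
                 (of_int P / of_int Q) * (of_int c * (of_int P / of_int Q) + of_int d)"
  shows "\<exists>l. a*P + b*Q = l*P \<and> c*P + d*Q = l*Q"
proof -
  have "(of_int (Q * (Q * (a*P + b*Q))) :: complex) = of_int (Q * (P * (c*P + d*Q)))"
    using fix_PQ \<open>Q > 0\<close> by (simp add: field_simps)
  then have eq: "Q * (a*P + b*Q) = P * (c*P + d*Q)"
    using \<open>Q > 0\<close> by (simp only: of_int_eq_iff) simp
  then have "Q dvd P * (c*P + d*Q)" by (metis dvd_triv_left)
  then have "Q dvd c*P + d*Q"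
    using \<open>coprime P Q\<close> by (metis coprime_commute coprime_dvd_mult_right_iff)
  then obtain l where l: "c*P + d*Q = l*Q" by (auto simp: dvd_def mult.commute)
  then have "Q * (a*P + b*Q) = Q * (l*P)" using eq by (simp add: algebra_simps)
  then show ?thesis using l \<open>Q > 0\<close> by auto
qed

lemma cusp_fixed_primitive_eigenvector:
  fixes a b c d :: int
  assumes "cusp_fixed (a, b, c, d)" "hyperbolic (a, b, c, d)"
  shows "\<exists>p q l. coprime p q \<and> a*p + b*q = l*p \<and> c*p + d*q = l*q"
proof (cases "c = 0")
  case True
  then show ?thesis by (intro exI[of _ 1] exI[of _ 0] exI[of _ a]) auto
next
  case False
  have "fixed_points (a, b, c, d) \<noteq> {}"
    using assms(2) by (auto simp: hyperbolic_def)
  then obtain z where z: "Some z \<in> fixed_points (a, b, c, d)"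
    and fix_z: "of_int a * z + of_int b = z * (of_int c * z + of_int d)"
    using False by (auto simp: fixed_points_def)
  have "z \<in> \<rat>" using assms(1) z by (auto simp: cusp_fixed_def in_P1Q_def)
  then obtain r where "z = of_rat r" by (auto elim: Rats_cases)
  moreover obtain P Q where PQ: "quotient_of r = (P, Q)" by (cases "quotient_of r")
  ultimately have "z = of_int P / of_int Q"
    using quotient_of_div[OF PQ] by (simp add: of_rat_divide)
  moreover have "coprime P Q" "Q > 0"
    using PQ quotient_of_coprime quotient_of_denom_pos by blast+
  ultimately show ?thesis
    using primitive_eigenvector_of_rational_fixed_point fix_z by blast
qed

lemma SL2Z_conj_upper_of_eigenvector:
  fixes a b c d p q l :: int
  assumes "coprime p q" and eig: "a*p + b*q = l*p" "c*p + d*q = l*q"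
  shows "\<exists>y. SL2Z_conj (a, b, c, d) (l, y, 0, a + d - l)"
proof -
  obtain u v where uv: "u*p + v*q = 1"
    using bezout_int[of p q] \<open>coprime p q\<close> by auto
  \<comment> \<open>g maps the eigenvector (p, q) to (1, 0)\<close>
  define g where "g = ((u, v, -q, p) :: mat2)"
  have "mat2_det g = 1" using uv by (simp add: g_def mat2_det_def algebra_simps)
  obtain B1 y B3 B4 where B: "mat2_mult (mat2_mult g (a, b, c, d)) (mat2_adj g) = (B1, y, B3, B4)"
    by (cases "mat2_mult (mat2_mult g (a, b, c, d)) (mat2_adj g)" rule: prod_cases4)
  then have "B1 = u*(a*p + b*q) + v*(c*p + d*q)" "B3 = p*(c*p + d*q) - q*(a*p + b*q)"
    "B1 + B4 = (a + d)*(u*p + v*q)"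
    by (auto simp: g_def mat2_mult_def mat2_adj_def algebra_simps)
  moreover have "u*(l*p) + v*(l*q) = l*(u*p + v*q)" "p*(l*q) - q*(l*p) = 0"
    by (simp_all add: algebra_simps)
  ultimately have "(B1, y, B3, B4) = (l, y, 0, a + d - l)"
    unfolding eig uv by simp
  then show ?thesis
    using B \<open>mat2_det g = 1\<close> unfolding SL2Z_conj_def SL2Z_def
    by (intro exI[of _ y] bexI[of _ g]) auto
qed

lemma SL2Z_conj_upper_swap:
  fixes a x d :: int
  assumes "a \<noteq> d"
  shows "\<exists>y. SL2Z_conj (a, x, 0, d) (d, y, 0, a)"
proof -
  define g where "g = gcd x (d - a)"
  have "g \<noteq> 0" using assms by (simp add: g_def)
  define p q where "p = x div g" and "q = (d - a) div g"
  have "coprime p q"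
    using \<open>g \<noteq> 0\<close> unfolding p_def q_def g_def by (intro div_gcd_coprime) auto
  have "x = p*g" "d - a = q*g" by (simp_all add: p_def q_def g_def)
  then have "g * (a*p + x*q) = g * (d*p)" by (simp add: algebra_simps)
  then have "a*p + x*q = d*p" using \<open>g \<noteq> 0\<close> by simp
  then show ?thesis
    using SL2Z_conj_upper_of_eigenvector[OF \<open>coprime p q\<close>, of a x d 0 d] by simp
qed

lemma SL2Z_conj_upper_translate:
  fixes a x d w :: int
  shows "SL2Z_conj (a, x, 0, d) (a, x + w*(d - a), 0, d)"
proof -
  have "mat2_mult (mat2_mult (1, w, 0, 1) (a, x, 0, d)) (mat2_adj (1, w, 0, 1)) =
        (a, x + w*(d - a), 0, d)"
    by (simp add: mat2_mult_def mat2_adj_def algebra_simps)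
  then show ?thesis
    unfolding SL2Z_conj_def SL2Z_def by (intro bexI[of _ "(1, w, 0, 1)"]) (auto simp: mat2_det_def)
qed

lemma SL2Z_conj_upper_dvd:
  fixes a x1 x2 d :: int
  assumes "a \<noteq> d" "SL2Z_conj (a, x1, 0, d) (a, x2, 0, d)"
  shows "(d - a) dvd x1 - x2"
proof -
  obtain g where "mat2_det g = 1" and comm: "mat2_mult (a, x2, 0, d) g = mat2_mult g (a, x1, 0, d)"
    using assms(2) by (rule SL2Z_conj_intertwines)
  moreover obtain p r q t where g: "g = (p, r, q, t)" by (cases g rule: prod_cases4)
  ultimately have "d*q = q*a" and x: "a*r + x2*t = p*x1 + r*d" and "p*t - r*q = 1"
    by (auto simp: mat2_mult_def mat2_det_def)
  then have "q = 0" using assms(1) by simp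
  then have "p = 1 \<and> t = 1 \<or> p = -1 \<and> t = -1"
    using \<open>p*t - r*q = 1\<close> zmult_eq_1_iff[of p t] by auto
  then have "x1 - x2 = (d - a) * (- (p*r))"
    using x by (auto simp: algebra_simps)
  then show ?thesis by (rule dvdI)
qed

lemma ex_cong_in_range:
  fixes N y :: int
  assumes "N > 0"
  obtains m where "1 \<le> m" "m \<le> N" "N dvd m - y"
proof
  show "1 \<le> (y - 1) mod N + 1" "(y - 1) mod N + 1 \<le> N"
    using assms by (simp_all add: add1_zle_eq)
  have "(y - 1) mod N + 1 - y = - (N * ((y - 1) div N))"
    using minus_mod_eq_mult_div[of "y - 1" N] by simp
  then show "N dvd (y - 1) mod N + 1 - y" by simp
qed

lemma eq_if_dvd_diff_in_range:
  fixes N m1 m2 :: int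
  assumes "N dvd m1 - m2" "1 \<le> m1" "m1 \<le> N" "1 \<le> m2" "m2 \<le> N"
  shows "m1 = m2"
proof (rule ccontr)
  assume "m1 \<noteq> m2"
  then have "\<bar>N\<bar> \<le> \<bar>m1 - m2\<bar>" using assms(1) dvd_imp_le_int by simp
  then show False using assms(2-5) by linarith
qed

lemma ex_linear_cong_in_range:
  fixes N c t :: int
  assumes "N > 0" "coprime c N"
  obtains m where "1 \<le> m" "m \<le> N" "N dvd m * c - t"
proof -
  obtain u v where uv: "u * c + v * N = 1"
    using bezout_int[of c N] assms(2) by auto
  obtain m where m: "1 \<le> m" "m \<le> N" "N dvd m - u * t"
    using ex_cong_in_range[OF assms(1)] by blast
  have "(m - u * t) * c - N * (v * t) = m * c - t * (u * c + v * N)"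
    by (simp add: algebra_simps)
  then have "m * c - t = (m - u * t) * c - N * (v * t)" using uv by simp
  then have "N dvd m * c - t" using m(3) by simp
  with m(1,2) show ?thesis by (rule that)
qed

lemma coprime_div_gcd_diff:
  fixes a d :: int
  assumes "a \<noteq> 0 \<or> d \<noteq> 0"
  shows "coprime (a div gcd a d) ((d - a) div gcd a d)"
proof -
  have "coprime (a div gcd a d) (d div gcd a d)"
    using assms by (rule div_gcd_coprime)
  moreover have "(d - a) div gcd a d = d div gcd a d - a div gcd a d"
    by simp
  ultimately show ?thesis
    by (metis coprime_iff_gcd_eq_1 gcd.commute gcd_diff1)
qed

text \<open>Choose \<open>b \<equiv> x\<close> modulo \<open>h = gcd a d\<close> first, then solve \<open>m (a/h) \<equiv> (x - b)/h\<close>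
  modulo \<open>(d - a)/h\<close>.\<close>

lemma upper_entry_normal_form_exists:
  fixes a d x :: int
  assumes "0 < a" "a < d" "coprime x (gcd a d)"
  obtains b m where "1 \<le> b" "b \<le> gcd a d" "coprime b (gcd a d)"
    "1 \<le> m" "m \<le> (d - a) div gcd a d" "(d - a) dvd x - (b + m*a)"
proof -
  define h where "h = gcd a d"
  define a' N where "a' = a div h" and "N = (d - a) div h"
  have "h > 0" using assms(1) by (simp add: h_def)
  have a: "a = a' * h" by (simp add: a'_def h_def)
  have dma: "d - a = N * h"
    unfolding N_def h_def by (rule dvd_div_mult_self [symmetric]) simp
  then have "0 < N * h" using assms(2) by simp
  then have "N > 0" using \<open>h > 0\<close> by (simp add: zero_less_mult_iff)
  have "coprime a' N"
    unfolding a'_def N_def h_def by (rule coprime_div_gcd_diff) (use assms(1) in simp)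
  obtain b where b: "1 \<le> b" "b \<le> h" "h dvd b - x"
    using ex_cong_in_range[OF \<open>h > 0\<close>] by blast
  then obtain t where t: "x - b = h * t" by (metis dvd_diff_commute dvdE)
  have "b = (- t) * h + x" using t by (simp add: algebra_simps)
  then have "gcd h b = gcd h x" by (simp only: gcd_add_mult)
  then have "coprime b h"
    using assms(3) by (simp add: coprime_iff_gcd_eq_1 gcd.commute h_def)
  obtain m where m: "1 \<le> m" "m \<le> N" "N dvd m * a' - t"
    using ex_linear_cong_in_range[OF \<open>N > 0\<close> \<open>coprime a' N\<close>] by blast
  then have "N * h dvd h * (m * a' - t)" by (simp add: mult.commute)
  moreover have "h * (m * a' - t) = (b + m * a) - x"
    using a t by (simp add: algebra_simps)
  ultimately have "(d - a) dvd x - (b + m * a)" using dma by (simp add: dvd_diff_commute)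
  then show ?thesis
    using that b \<open>coprime b h\<close> m unfolding h_def N_def by blast
qed

lemma upper_entry_normal_form_unique:
  fixes a d b1 b2 m1 m2 :: int
  assumes b: "1 \<le> b1" "b1 \<le> gcd a d" "1 \<le> b2" "b2 \<le> gcd a d"
    and m: "1 \<le> m1" "m1 \<le> (d - a) div gcd a d" "1 \<le> m2" "m2 \<le> (d - a) div gcd a d"
    and dvd: "(d - a) dvd (b1 + m1*a) - (b2 + m2*a)"
  shows "b1 = b2 \<and> m1 = m2"
proof -
  define h where "h = gcd a d"
  define a' N where "a' = a div h" and "N = (d - a) div h"
  have a: "a = a' * h" by (simp add: a'_def h_def)
  have dma: "d - a = N * h"
    unfolding N_def h_def by (rule dvd_div_mult_self [symmetric]) simp
  have "h > 0" using b unfolding h_def by linarith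
  then have "a \<noteq> 0 \<or> d \<noteq> 0" by (auto simp: h_def)
  then have "coprime a' N"
    unfolding a'_def N_def h_def by (rule coprime_div_gcd_diff)
  have "h dvd d - a" using dma by simp
  then have "h dvd (b1 + m1*a) - (b2 + m2*a)" using dvd by (rule dvd_trans)
  moreover have "h dvd (m1 - m2) * a" using a by simp
  ultimately have "h dvd ((b1 + m1*a) - (b2 + m2*a)) - (m1 - m2) * a" by (rule dvd_diff)
  then have "h dvd b1 - b2" by (simp add: algebra_simps)
  then have "b1 = b2" using b eq_if_dvd_diff_in_range unfolding h_def by blast
  then have "(b1 + m1*a) - (b2 + m2*a) = h * ((m1 - m2) * a')"
    using a by (simp add: algebra_simps)
  then have "N * h dvd h * ((m1 - m2) * a')" using dvd dma by simp
  then have "N dvd (m1 - m2) * a'" using \<open>h > 0\<close> by (simp add: mult.commute)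
  then have "N dvd m1 - m2"
    using \<open>coprime a' N\<close> by (simp add: coprime_commute coprime_dvd_mult_left_iff)
  then have "m1 = m2" using m eq_if_dvd_diff_in_range unfolding N_def h_def by blast
  with \<open>b1 = b2\<close> show ?thesis ..
qed

lemma diag_eq_if_sum_prod_eq:
  fixes a1 d1 a2 d2 :: int
  assumes "a1 < d1" "a2 < d2" "a1 * d1 = a2 * d2" "a1 + d1 = a2 + d2"
  shows "a1 = a2 \<and> d1 = d2"
proof -
  have "(d1 - a1)\<^sup>2 = (a1 + d1)\<^sup>2 - 4 * (a1 * d1)" "(d2 - a2)\<^sup>2 = (a2 + d2)\<^sup>2 - 4 * (a2 * d2)"
    by (simp_all add: power2_eq_square algebra_simps)
  then have "(d1 - a1)\<^sup>2 = (d2 - a2)\<^sup>2" using assms(3,4) by simp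
  then have "d1 - a1 = d2 - a2" using assms(1,2) by (simp add: power2_eq_iff_nonneg)
  then show ?thesis using assms(4) by simp
qed

lemma reps_subset:
  "reps n \<subseteq> {A \<in> primitive_mats ((int n)\<^sup>2). hyperbolic A \<and> cusp_fixed A}"
proof
  fix B assume "B \<in> reps n"
  then obtain s a d b m where B: "B = mat2_scale s (a, b + m*a, 0, d)" and s: "s \<in> {1, -1}"
    and "0 < a" "a < d" "a * d = (int n)\<^sup>2" "coprime b (gcd a d)"
    unfolding reps_def by blast
  obtain k where "m * a = k * gcd a d" by (metis dvd_mult2 dvdE gcd_dvd1 mult.commute)
  then have "gcd (gcd a d) (b + m*a) = gcd (gcd a d) b"
    by (simp only: add.commute[of b] gcd_add_mult)
  then have "gcd (gcd a d) (b + m*a) = 1"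
    using \<open>coprime b (gcd a d)\<close> by (simp add: coprime_iff_gcd_eq_1 gcd.commute)
  then have "mat2_content B = 1"
    unfolding B mat2_content_scale using s by (auto simp: mat2_content_def ac_simps)
  moreover have "mat2_det B = (int n)\<^sup>2"
    unfolding B mat2_det_scale using s \<open>a * d = (int n)\<^sup>2\<close> by (auto simp: mat2_det_def)
  moreover have "hyperbolic B \<and> cusp_fixed B"
    using s \<open>a < d\<close> hyperbolic_cusp_fixed_upper by (auto simp: B mat2_scale_def)
  ultimately show "B \<in> {A \<in> primitive_mats ((int n)\<^sup>2). hyperbolic A \<and> cusp_fixed A}"
    by (simp add: primitive_mats_iff)
qed

lemma reps_unique:
  assumes "B1 \<in> reps n" "B2 \<in> reps n" "SL2Z_conj B1 B2"
  shows "B1 = B2"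
proof -
  obtain s1 a1 d1 b1 m1 where B1: "B1 = mat2_scale s1 (a1, b1 + m1*a1, 0, d1)" and s1: "s1 \<in> {1, -1}"
    and a1: "0 < a1" "a1 < d1" "a1 * d1 = (int n)\<^sup>2"
    and bm1: "1 \<le> b1" "b1 \<le> gcd a1 d1" "1 \<le> m1" "m1 \<le> (d1 - a1) div gcd a1 d1"
    using assms(1) unfolding reps_def by blast
  obtain s2 a2 d2 b2 m2 where B2: "B2 = mat2_scale s2 (a2, b2 + m2*a2, 0, d2)" and s2: "s2 \<in> {1, -1}"
    and a2: "0 < a2" "a2 < d2" "a2 * d2 = (int n)\<^sup>2"
    and bm2: "1 \<le> b2" "b2 \<le> gcd a2 d2" "1 \<le> m2" "m2 \<le> (d2 - a2) div gcd a2 d2"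
    using assms(2) unfolding reps_def by blast
  have "s1 * (a1 + d1) = s2 * (a2 + d2)"
    using SL2Z_conj_trace[OF assms(3)] unfolding B1 B2 mat2_trace_scale
    by (simp add: mat2_trace_def)
  then have s: "s1 = s2" and "a1 + d1 = a2 + d2"
    using s1 s2 a1 a2 by auto
  then have "a1 = a2" "d1 = d2"
    using diag_eq_if_sum_prod_eq a1 a2 by auto
  then have "SL2Z_conj (s1*a1, s1*(b1 + m1*a1), 0, s1*d1) (s1*a1, s1*(b2 + m2*a1), 0, s1*d1)"
    using assms(3) s by (simp add: B1 B2 mat2_scale_def)
  then have "(s1*d1 - s1*a1) dvd s1*(b1 + m1*a1) - s1*(b2 + m2*a1)"
    using s1 a1 by (intro SL2Z_conj_upper_dvd) auto
  then have "(d1 - a1) dvd (b1 + m1*a1) - (b2 + m2*a1)"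
    using s1 by (auto simp: right_diff_distrib[symmetric])
  then have "b1 = b2 \<and> m1 = m2"
    using upper_entry_normal_form_unique bm1 bm2 \<open>a1 = a2\<close> \<open>d1 = d2\<close> by blast
  then show ?thesis using B1 B2 s \<open>a1 = a2\<close> \<open>d1 = d2\<close> by simp
qed

lemma upper_conj_reps_normalized:
  fixes a d x s :: int
  assumes "s \<in> {1, -1}" "0 < a" "a < d" "a * d = (int n)\<^sup>2" "coprime x (gcd a d)"
  shows "\<exists>B\<in>reps n. SL2Z_conj (mat2_scale s (a, x, 0, d)) B"
proof -
  obtain b m where bm: "1 \<le> b" "b \<le> gcd a d" "coprime b (gcd a d)"
    "1 \<le> m" "m \<le> (d - a) div gcd a d" and dvd: "(d - a) dvd x - (b + m*a)"
    using upper_entry_normal_form_exists assms(2,3,5) by blast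
  from dvd obtain k where "x - (b + m*a) = (d - a) * k" by (rule dvdE)
  then have bm_eq: "b + m*a = x + (- k) * (d - a)" by (simp add: algebra_simps)
  have "SL2Z_conj (s*a, s*x, 0, s*d) (s*a, s*x + (- k) * (s*d - s*a), 0, s*d)"
    by (rule SL2Z_conj_upper_translate)
  also have "s*x + (- k) * (s*d - s*a) = s * (b + m*a)"
    unfolding bm_eq by (simp add: algebra_simps)
  also have "(s*a, s * (b + m*a), 0, s*d) = mat2_scale s (a, b + m*a, 0, d)"
    by (simp add: mat2_scale_def)
  finally have "SL2Z_conj (mat2_scale s (a, x, 0, d)) (mat2_scale s (a, b + m*a, 0, d))"
    by (simp add: mat2_scale_def)
  moreover have "mat2_scale s (a, b + m*a, 0, d) \<in> reps n"
    unfolding reps_def using assms(1-4) bm by blast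
  ultimately show ?thesis by blast
qed

lemma upper_conj_reps:
  fixes l y \<mu> :: int
  assumes "n > 0" "l * \<mu> = (int n)\<^sup>2" "l \<noteq> \<mu>" "mat2_content (l, y, 0, \<mu>) = 1"
  shows "\<exists>B\<in>reps n. SL2Z_conj (l, y, 0, \<mu>) B"
proof -
  have ordered: "\<exists>B\<in>reps n. SL2Z_conj (l, y, 0, \<mu>) B"
    if "l * \<mu> = (int n)\<^sup>2" "\<bar>l\<bar> < \<bar>\<mu>\<bar>" "mat2_content (l, y, 0, \<mu>) = 1" for l y \<mu> :: int
  proof -
    define s where "s = sgn l"
    have "0 < l * \<mu>" using that(1) \<open>n > 0\<close> by simp
    then have s: "s \<in> {1, -1}" "l = s * \<bar>l\<bar>" "\<mu> = s * \<bar>\<mu>\<bar>" "y = s * (s * y)"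
      by (auto simp: s_def sgn_if zero_less_mult_iff)
    have "mat2_scale s (\<bar>l\<bar>, s * y, 0, \<bar>\<mu>\<bar>) = (s * \<bar>l\<bar>, s * (s * y), 0, s * \<bar>\<mu>\<bar>)"
      by (simp add: mat2_scale_def)
    then have scale: "(l, y, 0, \<mu>) = mat2_scale s (\<bar>l\<bar>, s * y, 0, \<bar>\<mu>\<bar>)"
      by (simp only: s(2-4) [symmetric])
    have "gcd (s * y) (gcd \<bar>l\<bar> \<bar>\<mu>\<bar>) = gcd y (gcd l \<mu>)"
      using s(1) by auto
    also have "\<dots> = mat2_content (l, y, 0, \<mu>)"
      by (simp add: mat2_content_def gcd.assoc gcd.left_commute)
    finally have "coprime (s * y) (gcd \<bar>l\<bar> \<bar>\<mu>\<bar>)"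
      using that(3) by (simp add: coprime_iff_gcd_eq_1)
    moreover have "0 < \<bar>l\<bar>" "\<bar>l\<bar> * \<bar>\<mu>\<bar> = (int n)\<^sup>2"
      using \<open>0 < l * \<mu>\<close> that(1) by (auto simp: abs_mult [symmetric])
    ultimately show ?thesis
      using upper_conj_reps_normalized[OF s(1)] that(2) by (simp add: scale)
  qed
  have "\<bar>l\<bar> \<noteq> \<bar>\<mu>\<bar>"
  proof
    assume "\<bar>l\<bar> = \<bar>\<mu>\<bar>"
    then have "l = - \<mu>" using assms(3) by (auto simp: abs_eq_iff)
    moreover have "0 < l * \<mu>" using assms(1,2) by simp
    ultimately show False by (simp add: not_square_less_zero)
  qed
  then consider "\<bar>l\<bar> < \<bar>\<mu>\<bar>" | "\<bar>\<mu>\<bar> < \<bar>l\<bar>" by linarith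
  then show ?thesis
  proof cases
    case 1
    then show ?thesis using ordered assms(2,4) by blast
  next
    case 2
    obtain y' where swap: "SL2Z_conj (l, y, 0, \<mu>) (\<mu>, y', 0, l)"
      using SL2Z_conj_upper_swap assms(3) by blast
    then have "mat2_content (\<mu>, y', 0, l) = 1"
      using SL2Z_conj_content assms(4) by simp
    moreover have "\<mu> * l = (int n)\<^sup>2" using assms(2) by (simp add: mult.commute)
    ultimately obtain B where "B \<in> reps n" "SL2Z_conj (\<mu>, y', 0, l) B"
      using ordered 2 by blast
    then show ?thesis using swap SL2Z_conj_trans by blast
  qed
qed

lemma reps_complete:
  assumes "n > 0" "A \<in> primitive_mats ((int n)\<^sup>2)" "hyperbolic A" "cusp_fixed A"
  shows "\<exists>B\<in>reps n. SL2Z_conj A B"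
proof -
  obtain a b c d where A: "A = (a, b, c, d)" by (cases A rule: prod_cases4)
  obtain p q l where "coprime p q" "a*p + b*q = l*p" "c*p + d*q = l*q"
    using cusp_fixed_primitive_eigenvector assms(3,4) A by blast
  then obtain y where conj: "SL2Z_conj A (l, y, 0, a + d - l)"
    using SL2Z_conj_upper_of_eigenvector A by blast
  define \<mu> where "\<mu> = a + d - l"
  have "mat2_det A = (int n)\<^sup>2" "mat2_content A = 1"
    using assms(2) by (simp_all add: primitive_mats_iff)
  then have det: "l * \<mu> = (int n)\<^sup>2" and "mat2_content (l, y, 0, \<mu>) = 1"
    using SL2Z_conj_det[OF conj] SL2Z_conj_content[OF conj]
    by (simp_all add: \<mu>_def mat2_det_def)
  moreover have "(mat2_trace A)\<^sup>2 - 4 * mat2_det A = (l - \<mu>)\<^sup>2"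
    using det \<open>mat2_det A = (int n)\<^sup>2\<close>
    by (simp add: A \<mu>_def mat2_trace_def power2_eq_square algebra_simps)
  then have "l \<noteq> \<mu>"
    using hyperbolic_discriminant_nonzero[OF assms(3)] by auto
  ultimately show ?thesis
    using upper_conj_reps assms(1) conj SL2Z_conj_trans unfolding \<mu>_def by blast
qed

theorem lemma9:
  fixes n :: nat
  assumes "n > 0"
  shows "complete_reps (reps n)
           {A \<in> primitive_mats ((int n)^2). hyperbolic A \<and> cusp_fixed A}"
  unfolding complete_reps_def
  using reps_subset reps_complete[OF assms] reps_unique by blast

end
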